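(* For finite sets $A, X \subset \mathbb{R}$ define the popular sums \[ P_A(X) = \left\{ y \in X+X : \sigma_X(y) \geq \frac{|X|^2}{8\,|X+X|\,\log|A|} \right\} \] and the rich set \[ R_A(X) = \left\{ x \in X : |(X+x)\cap P_A(X)| \geq \tfrac{3}{4}|X| \right\}. \] Then: (1) For every sufficiently large finite set $A\subset\mathbb{R}$, there exists $B \subset A$ with $|B| \geq \frac12 |A|$ such that \[ E_{\frac{12}{7}}(R_A(B)) \geq \frac{E_{\frac{12}{7}}(B)}{\log|A|}. \] (2) For such $A$ and $B$, there is $\Delta \in \mathbb{R}$ such that, defining \[ P_\Delta = \{ x : \delta_{R_A(B)}(x) \in [\Delta, 2\Delta)\}, \] we have \[ \Delta^{\frac{12}{7}}|P_\Delta| \approx E_{\frac{12}{7}}(R_A(B)) \approx E_{\frac{12}{7}}(B), \] and moreover \[ \Delta^2 |P_\Delta|^2 |B|^2 \ll E_3(B)\cdot \#\{(p_1,p_2,p_3) : p_1 - p_2 = p_3,\ p_1,p_2 \in P_A(B),\ p_3 \in P_\Delta\}. \]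
   Context: For finite $X\subset\mathbb{R}$: $X+X = \{x_1+x_2: x_i\in X\}$, $\sigma_X(y) = \#\{(x_1,x_2)\in X^2 : x_1+x_2 = y\}$, $\delta_X(x) = \#\{(x_1,x_2)\in X^2: x_1 - x_2 = x\}$, and for real $k \ge 1$, $E_k(X) = \sum_x \delta_X(x)^k$. Asymptotic notation is as $|A|\to\infty$: $F \ll G$ means $F = O(G)$ with an absolute constant; $F \lesssim G$ means $F \ll G (\log|A|)^{c}$ for some absolute constant $c$; $F \approx G$ means $F \lesssim G$ and $G \lesssim F$. *)

theory Defs
  imports Complex_Main
begin

definition sumset :: "real set \<Rightarrow> real set" where
  "sumset X = {x1 + x2 | x1 x2. x1 \<in> X \<and> x2 \<in> X}"

definition diffset :: "real set \<Rightarrow> real set" where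
  "diffset X = {x1 - x2 | x1 x2. x1 \<in> X \<and> x2 \<in> X}"

definition sigma_rep :: "real set \<Rightarrow> real \<Rightarrow> nat" where
  "sigma_rep X y = card {(x1, x2) \<in> X \<times> X. x1 + x2 = y}"

definition delta_rep :: "real set \<Rightarrow> real \<Rightarrow> nat" where
  "delta_rep X x = card {(x1, x2) \<in> X \<times> X. x1 - x2 = x}"

text \<open>E_k(X) = sum over x of delta_X(x)^k; delta_X vanishes off X - X.\<close>
definition energy :: "real \<Rightarrow> real set \<Rightarrow> real" where
  "energy k X = (\<Sum>x \<in> diffset X. real (delta_rep X x) powr k)"

definition popular_sums :: "real set \<Rightarrow> real set \<Rightarrow> real set" where
  "popular_sums A X = {y \<in> sumset X.
     real (sigma_rep X y) \<ge> real (card X) ^ 2 / (8 * real (card (sumset X)) * ln (real (card A)))}"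

definition rich_set :: "real set \<Rightarrow> real set \<Rightarrow> real set" where
  "rich_set A X = {x \<in> X. real (card ((\<lambda>z. z + x) ` X \<inter> popular_sums A X)) \<ge> 3 / 4 * real (card X)}"

definition level_set :: "real set \<Rightarrow> real \<Rightarrow> real set" where
  "level_set R \<Delta> = {x. \<Delta> \<le> real (delta_rep R x) \<and> real (delta_rep R x) < 2 * \<Delta>}"

definition triple_count :: "real set \<Rightarrow> real set \<Rightarrow> nat" where
  "triple_count P Q = card {(p1, p2, p3). p1 - p2 = p3 \<and> p1 \<in> P \<and> p2 \<in> P \<and> p3 \<in> Q}"

end

(*
  Part (1): iterate B |-> R_A(B) starting from A. The pairs of B with a non-popular sum number
  at most |B|^2 / (8 log|A|), and every non-rich element of B lies in at least |B|/4 of them, so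
  each step removes at most |B| / (2 log|A|) elements and at least half of A survives
  floor(log|A|) steps. If the 12/7-energy dropped by a factor log|A| at each of these steps, the
  last set would have energy below 1, because E(A) <= |A|^4 = exp(4 log|A|), which is less than
  (log|A|)^floor(log|A|) once log|A| >= e^8.

  Part (2): Delta is the dyadic level 2^j of delta_R carrying the largest share of E_{12/7}(R);
  there are only 1 + log_2 |R| levels. For the last inequality count the triples (r1, r2, b) with
  r1 - r2 in P_Delta, b in B and r1 + b, r2 + b popular. As r1 and r2 are rich, each of the at
  least Delta |P_Delta| pairs (r1, r2) admits at least |B|/2 choices of b. Grouped instead by
  (p1, p2) = (r1 + b, r2 + b), Cauchy-Schwarz bounds the count by the square root of
  E_3(B) #{(p1, p2) : p1 - p2 in P_Delta}, as the sum over (s1, s2) of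
  #{b : s1 - b, s2 - b in B}^2 is E_3(B).
*)
theory Submission
  imports Defs "HOL-Analysis.Harmonic_Numbers" "HOL-Library.Discrete_Functions"
begin

section \<open>Representation functions and additive energies\<close>

lemma sumset_eq_image: "sumset X = (\<lambda>(x1, x2). x1 + x2) ` (X \<times> X)"
  unfolding sumset_def by auto

lemma diffset_eq_image: "diffset X = (\<lambda>(x1, x2). x1 - x2) ` (X \<times> X)"
  unfolding diffset_def by auto

lemma add_mem_sumset: "x \<in> X \<Longrightarrow> y \<in> X \<Longrightarrow> x + y \<in> sumset X"
  unfolding sumset_def by blast

lemma finite_sumset: "finite X \<Longrightarrow> finite (sumset X)"
  by (simp add: sumset_eq_image)

lemma finite_diffset: "finite X \<Longrightarrow> finite (diffset X)"
  by (simp add: diffset_eq_image)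

lemma card_eq_sum_card_fibres:
  assumes "finite S" "finite T"
  shows "card {x \<in> S. g x \<in> T} = (\<Sum>y\<in>T. card {x \<in> S. g x = y})"
proof -
  have "{x \<in> S. g x \<in> T} = (\<Union>y\<in>T. {x \<in> S. g x = y})"
    by auto
  then show ?thesis
    using assms by (simp add: card_UN_disjoint disjoint_iff)
qed

lemma sigma_rep_altdef: "sigma_rep X y = card {p \<in> X \<times> X. fst p + snd p = y}"
  unfolding sigma_rep_def by (rule arg_cong[where f = card]) auto

lemma delta_rep_altdef: "delta_rep X d = card {p \<in> X \<times> X. fst p - snd p = d}"
  unfolding delta_rep_def by (rule arg_cong[where f = card]) auto

lemma delta_rep_zero: "delta_rep X 0 = card X"
proof -
  have "{p \<in> X \<times> X. fst p - snd p = 0} = (\<lambda>x. (x, x)) ` X"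
    by auto
  then show ?thesis
    by (simp add: delta_rep_altdef card_image inj_on_def)
qed

lemma delta_rep_le_card:
  assumes "finite X"
  shows "delta_rep X d \<le> card X"
proof -
  have "{p \<in> X \<times> X. fst p - snd p = d} \<subseteq> (\<lambda>x. (x + d, x)) ` X"
    by force
  then have "delta_rep X d \<le> card ((\<lambda>x. (x + d, x)) ` X)"
    unfolding delta_rep_altdef using assms by (intro card_mono) auto
  also have "\<dots> \<le> card X"
    using assms by (rule card_image_le)
  finally show ?thesis .
qed

lemma delta_rep_mono:
  assumes "finite X" "Y \<subseteq> X"
  shows "delta_rep Y d \<le> delta_rep X d"
  unfolding delta_rep_altdef using assms by (intro card_mono) auto

lemma delta_rep_pos_iff:
  assumes "finite X"
  shows "0 < delta_rep X d \<longleftrightarrow> d \<in> diffset X"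
  using assms unfolding delta_rep_altdef diffset_def by (auto simp: card_gt_0_iff)

lemma sum_pairs_by_difference:
  fixes f :: "real \<Rightarrow> 'a::comm_semiring_1"
  assumes "finite X"
  shows "(\<Sum>p\<in>X \<times> X. f (fst p - snd p)) = (\<Sum>d\<in>diffset X. of_nat (delta_rep X d) * f d)"
proof -
  have "(\<Sum>p\<in>X \<times> X. f (fst p - snd p))
      = (\<Sum>d\<in>diffset X. \<Sum>p\<in>{p \<in> X \<times> X. fst p - snd p = d}. f (fst p - snd p))"
    using assms by (simp add: sum.image_gen[of "X \<times> X" _ "\<lambda>p. fst p - snd p"] diffset_eq_image
        case_prod_beta')
  also have "\<dots> = (\<Sum>d\<in>diffset X. of_nat (delta_rep X d) * f d)"
    unfolding delta_rep_altdef by (intro sum.cong refl) simp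
  finally show ?thesis .
qed

lemma energy_nonneg: "0 \<le> energy k X"
  unfolding energy_def by (intro sum_nonneg) simp

lemma energy_mono:
  assumes "finite X" "Y \<subseteq> X" "0 \<le> k"
  shows "energy k Y \<le> energy k X"
proof -
  have "diffset Y \<subseteq> diffset X"
    using assms(2) unfolding diffset_def by blast
  have "energy k Y \<le> (\<Sum>d\<in>diffset Y. real (delta_rep X d) powr k)"
    unfolding energy_def using assms by (intro sum_mono powr_mono2) (auto intro: delta_rep_mono)
  also have "\<dots> \<le> energy k X"
    unfolding energy_def using \<open>diffset Y \<subseteq> diffset X\<close> assms(1)
    by (intro sum_mono2 finite_diffset) auto
  finally show ?thesis .
qed

lemma one_le_energy:
  assumes "finite X" "X \<noteq> {}" "0 \<le> k"
  shows "1 \<le> energy k X"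
proof -
  have "0 \<in> diffset X"
    using assms(2) unfolding diffset_def by force
  have "1 \<le> real (delta_rep X 0) powr k"
    using assms by (simp add: delta_rep_zero card_gt_0_iff Suc_le_eq ge_one_powr_ge_zero)
  also have "\<dots> \<le> energy k X"
    unfolding energy_def using \<open>0 \<in> diffset X\<close> assms(1)
    by (intro member_le_sum finite_diffset) auto
  finally show ?thesis .
qed

lemma energy_le_card_power_4:
  assumes "finite X" "0 \<le> k" "k \<le> 2"
  shows "energy k X \<le> real (card X) ^ 4"
proof -
  have "real (delta_rep X d) powr k \<le> real (card X) ^ 2" if "d \<in> diffset X" for d
  proof -
    have "1 \<le> delta_rep X d" "delta_rep X d \<le> card X"
      using that assms(1) by (auto simp: delta_rep_pos_iff[symmetric] delta_rep_le_card)
    then have "real (delta_rep X d) powr k \<le> real (card X) powr k"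
      using assms by (intro powr_mono2) auto
    also have "\<dots> \<le> real (card X) powr 2"
      using \<open>1 \<le> delta_rep X d\<close> \<open>delta_rep X d \<le> card X\<close> assms by (intro powr_mono) auto
    finally show ?thesis
      by simp
  qed
  then have "energy k X \<le> (\<Sum>d\<in>diffset X. real (card X) ^ 2)"
    unfolding energy_def by (rule sum_mono)
  also have "\<dots> = real (card (diffset X)) * real (card X) ^ 2"
    by simp
  also have "\<dots> \<le> real (card X) ^ 2 * real (card X) ^ 2"
  proof (intro mult_right_mono)
    have "card (diffset X) \<le> card (X \<times> X)"
      unfolding diffset_eq_image using assms(1) by (intro card_image_le) simp
    then show "real (card (diffset X)) \<le> real (card X) ^ 2"
      by (simp add: power2_eq_square card_cartesian_product flip: of_nat_mult)
  qed simp
  finally show ?thesis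
    by simp
qed

section \<open>Popular sums and rich elements\<close>

lemma card_translate_Int:
  fixes x :: real
  shows "card ((\<lambda>z. z + x) ` X \<inter> P) = card {z \<in> X. z + x \<in> P}"
proof -
  have "(\<lambda>z. z + x) ` X \<inter> P = (\<lambda>z. z + x) ` {z \<in> X. z + x \<in> P}"
    by auto
  moreover have "inj_on (\<lambda>z. z + x) {z \<in> X. z + x \<in> P}"
    by (rule inj_onI) simp
  ultimately show ?thesis
    by (simp add: card_image)
qed

lemma rich_set_subset: "rich_set A X \<subseteq> X"
  unfolding rich_set_def by auto

lemma mem_rich_set_iff:
  "x \<in> rich_set A X \<longleftrightarrow>
     x \<in> X \<and> 3 / 4 * real (card X) \<le> real (card {z \<in> X. z + x \<in> popular_sums A X})"
  unfolding rich_set_def card_translate_Int by simp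

lemma popular_sums_subset: "popular_sums A X \<subseteq> sumset X"
  unfolding popular_sums_def by auto

lemma card_unpopular_pairs_le:
  assumes "finite X" "0 < ln (real (card A))"
  shows "real (card {p \<in> X \<times> X. fst p + snd p \<notin> popular_sums A X})
           \<le> real (card X) ^ 2 / (8 * ln (real (card A)))"
proof (cases "X = {}")
  case False
  define L where "L = ln (real (card A))"
  let ?S = "sumset X" and ?P = "popular_sums A X"
  have "finite ?S"
    using assms(1) by (rule finite_sumset)
  moreover have "?S \<noteq> {}"
    using False by (auto simp: sumset_def)
  ultimately have "0 < card ?S"
    by (simp add: card_gt_0_iff)
  have "card {p \<in> X \<times> X. fst p + snd p \<notin> ?P} = card {p \<in> X \<times> X. fst p + snd p \<in> ?S - ?P}"
    by (rule arg_cong[where f = card]) (auto intro: add_mem_sumset)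
  also have "\<dots> = (\<Sum>y\<in>?S - ?P. sigma_rep X y)"
    unfolding sigma_rep_altdef using assms(1) \<open>finite ?S\<close> by (intro card_eq_sum_card_fibres) auto
  also have "real \<dots> \<le> (\<Sum>y\<in>?S - ?P. real (card X) ^ 2 / (8 * real (card ?S) * L))"
    unfolding of_nat_sum L_def by (intro sum_mono) (auto simp: popular_sums_def)
  also have "\<dots> = real (card (?S - ?P)) * (real (card X) ^ 2 / (8 * real (card ?S) * L))"
    by simp
  also have "\<dots> \<le> real (card ?S) * (real (card X) ^ 2 / (8 * real (card ?S) * L))"
    using assms(2) \<open>finite ?S\<close> unfolding L_def by (intro mult_right_mono card_mono of_nat_mono) auto
  also have "\<dots> = real (card X) ^ 2 / (8 * L)"
    using \<open>0 < card ?S\<close> by simp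
  finally show ?thesis
    unfolding L_def .
qed simp

lemma card_not_rich_le:
  assumes "finite X" "0 < ln (real (card A))"
  shows "real (card (X - rich_set A X)) \<le> real (card X) / (2 * ln (real (card A)))"
proof -
  define L where "L = ln (real (card A))"
  let ?P = "popular_sums A X"
  have unpopular_partners: "real (card X) / 4 \<le> real (card {z \<in> X. x + z \<notin> ?P})"
    if "x \<in> X - rich_set A X" for x
  proof -
    have "{z \<in> X. x + z \<notin> ?P} = X - {z \<in> X. z + x \<in> ?P}"
      by (auto simp: add.commute)
    then have "card {z \<in> X. x + z \<notin> ?P} = card X - card {z \<in> X. z + x \<in> ?P}"
      using assms(1) by (simp add: card_Diff_subset)
    moreover have "card {z \<in> X. z + x \<in> ?P} \<le> card X"
      using assms(1) by (intro card_mono) auto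
    ultimately show ?thesis
      using that by (auto simp: mem_rich_set_iff)
  qed
  have "real (card (X - rich_set A X)) * (real (card X) / 4)
      = (\<Sum>x\<in>X - rich_set A X. real (card X) / 4)"
    by simp
  also have "\<dots> \<le> (\<Sum>x\<in>X - rich_set A X. real (card {z \<in> X. x + z \<notin> ?P}))"
    by (rule sum_mono) (rule unpopular_partners)
  also have "\<dots> = real (card (SIGMA x:X - rich_set A X. {z \<in> X. x + z \<notin> ?P}))"
    using assms(1) by (simp add: card_SigmaI)
  also have "\<dots> \<le> real (card {p \<in> X \<times> X. fst p + snd p \<notin> ?P})"
    using assms(1) by (intro of_nat_mono card_mono) auto
  also have "\<dots> \<le> real (card X) ^ 2 / (8 * L)"
    unfolding L_def by (rule card_unpopular_pairs_le[OF assms])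
  finally have bound: "real (card X) / 4 * real (card (X - rich_set A X))
      \<le> real (card X) / 4 * (real (card X) / (2 * L))"
    by (simp add: power2_eq_square field_simps)
  show ?thesis
  proof (cases "X - rich_set A X = {}")
    case True
    show ?thesis
      unfolding True using assms(2) by simp
  next
    case False
    then have "0 < real (card X) / 4"
      using assms(1) by (auto simp: card_gt_0_iff)
    then show ?thesis
      unfolding L_def by (rule mult_left_le_imp_le[OF bound[unfolded L_def]])
  qed
qed

lemma iterated_rich_set_subset: "(rich_set A ^^ i) X \<subseteq> X"
  by (induction i) (use rich_set_subset in auto)

lemma card_iterated_rich_set:
  assumes "finite A" "0 < ln (real (card A))" "real i \<le> ln (real (card A))"
  shows "card A \<le> 2 * card ((rich_set A ^^ i) A)"
proof -
  define L where "L = ln (real (card A))"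
  note sub = iterated_rich_set_subset[where A = A and X = A]
  then have fin: "finite ((rich_set A ^^ j) A)" for j
    using assms(1) finite_subset by blast
  have lower: "real (card A) - real j * real (card A) / (2 * L) \<le> real (card ((rich_set A ^^ j) A))"
    for j
  proof (induction j)
    case (Suc j)
    let ?X = "(rich_set A ^^ j) A"
    have "rich_set A ?X \<subseteq> ?X"
      by (rule rich_set_subset)
    then have "card ?X = card (rich_set A ?X) + card (?X - rich_set A ?X)"
      using fin[of j] by (simp add: card_Diff_subset card_mono finite_subset)
    moreover have "real (card (?X - rich_set A ?X)) \<le> real (card ?X) / (2 * L)"
      unfolding L_def by (rule card_not_rich_le[OF fin assms(2)])
    moreover have "real (card ?X) / (2 * L) \<le> real (card A) / (2 * L)"
      using card_mono[OF assms(1) sub] assms(2) unfolding L_def by (simp add: divide_right_mono)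
    moreover have "real (Suc j) * real (card A) / (2 * L)
        = real j * real (card A) / (2 * L) + real (card A) / (2 * L)"
      by (simp add: add_divide_distrib distrib_right)
    ultimately show ?case
      using Suc.IH by simp
  qed simp
  have "real i * real (card A) / (2 * L) \<le> L * real (card A) / (2 * L)"
    using assms(2,3) unfolding L_def by (intro divide_right_mono mult_right_mono) auto
  then have "real (card A) / 2 \<le> real (card ((rich_set A ^^ i) A))"
    using lower[of i] assms(2) unfolding L_def by simp
  then show ?thesis
    by linarith
qed

section \<open>Third energy and triple counts\<close>

definition common_shifts :: "real set \<Rightarrow> real set \<Rightarrow> real \<times> real \<Rightarrow> real set" where
  "common_shifts B R p = {b \<in> B. fst p - b \<in> R \<and> snd p - b \<in> R}"

lemma card_Int_translates:
  fixes b b' :: real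
  shows "card {s. s - b \<in> B \<and> s - b' \<in> B} = delta_rep B (b - b')"
proof -
  have "bij_betw (\<lambda>s. (s - b', s - b)) {s. s - b \<in> B \<and> s - b' \<in> B}
          {p \<in> B \<times> B. fst p - snd p = b - b'}"
    by (rule bij_betw_byWitness[where f' = "\<lambda>p. fst p + b'"]) (auto simp: diff_eq_eq diff_add_eq)
  then show ?thesis
    by (simp add: delta_rep_altdef bij_betw_same_card)
qed

(* Both sides count the quadruples (s1, s2, b, b') with s1 - b, s2 - b, s1 - b', s2 - b' in B. *)
lemma sum_card_common_shifts_squared:
  assumes "finite B"
  shows "(\<Sum>p\<in>sumset B \<times> sumset B. real (card (common_shifts B B p)) ^ 2) = energy 3 B"
proof -
  let ?V = "sumset B \<times> sumset B"
  let ?G = "\<lambda>q. {s. s - fst q \<in> B \<and> s - snd q \<in> B}"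
  have fin_G: "finite (?G q)" for q
  proof (rule finite_subset)
    show "?G q \<subseteq> (\<lambda>s. s - fst q) -` B"
      by auto
    show "finite ((\<lambda>s. s - fst q) -` B)"
      using assms by (rule finite_vimageI) (simp add: inj_on_def)
  qed
  have fin_H: "finite (common_shifts B B p)" for p
    using assms by (simp add: common_shifts_def)
  have "bij_betw (\<lambda>(q, p). (p, q)) (SIGMA q:B \<times> B. ?G q \<times> ?G q)
          (SIGMA p:?V. common_shifts B B p \<times> common_shifts B B p)"
    by (rule bij_betw_byWitness[where f' = "\<lambda>(p, q). (q, p)"])
      (auto simp: common_shifts_def sumset_def, force+)
  then have "card (SIGMA q:B \<times> B. ?G q \<times> ?G q)
      = card (SIGMA p:?V. common_shifts B B p \<times> common_shifts B B p)"
    by (rule bij_betw_same_card)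
  then have swap: "(\<Sum>p\<in>?V. card (common_shifts B B p) * card (common_shifts B B p))
      = (\<Sum>q\<in>B \<times> B. card (?G q) * card (?G q))"
    using assms fin_G fin_H by (simp add: finite_sumset)
  have "(\<Sum>p\<in>?V. real (card (common_shifts B B p)) ^ 2)
      = real (\<Sum>p\<in>?V. card (common_shifts B B p) * card (common_shifts B B p))"
    by (simp add: power2_eq_square)
  also have "\<dots> = (\<Sum>q\<in>B \<times> B. real (delta_rep B (fst q - snd q)) ^ 2)"
    unfolding swap by (simp add: card_Int_translates power2_eq_square)
  also have "\<dots> = (\<Sum>d\<in>diffset B. real (delta_rep B d) * real (delta_rep B d) ^ 2)"
    by (rule sum_pairs_by_difference[OF assms])
  also have "\<dots> = energy 3 B"
    unfolding energy_def by (intro sum.cong refl) (simp add: power2_eq_square power3_eq_cube)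
  finally show ?thesis .
qed

lemma triple_count_eq_card_pairs:
  "triple_count P Q = card {p \<in> P \<times> P. fst p - snd p \<in> Q}"
proof -
  have "bij_betw (\<lambda>p. (fst p, snd p, fst p - snd p)) {p \<in> P \<times> P. fst p - snd p \<in> Q}
          {(p1, p2, p3). p1 - p2 = p3 \<and> p1 \<in> P \<and> p2 \<in> P \<and> p3 \<in> Q}"
    by (rule bij_betw_byWitness[where f' = "\<lambda>(p1, p2, p3). (p1, p2)"]) auto
  then show ?thesis
    unfolding triple_count_def by (simp add: bij_betw_same_card)
qed

(* Both sides count the triples (r1, r2, b) with p = (r1 + b, r2 + b). *)
lemma sum_card_common_shifts_swap:
  fixes B R P Q :: "real set"
  assumes "finite B" "finite R" "finite P"
  shows "(\<Sum>p\<in>{p \<in> P \<times> P. fst p - snd p \<in> Q}. card (common_shifts B R p))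
       = (\<Sum>r\<in>{r \<in> R \<times> R. fst r - snd r \<in> Q}. card {b \<in> B. fst r + b \<in> P \<and> snd r + b \<in> P})"
proof -
  let ?W = "{p \<in> P \<times> P. fst p - snd p \<in> Q}" and ?D = "{r \<in> R \<times> R. fst r - snd r \<in> Q}"
  have "bij_betw (\<lambda>(p, b). ((fst p - b, snd p - b), b))
          (SIGMA p:?W. common_shifts B R p)
          (SIGMA r:?D. {b \<in> B. fst r + b \<in> P \<and> snd r + b \<in> P})"
    by (rule bij_betw_byWitness[where f' = "\<lambda>(r, b). ((fst r + b, snd r + b), b)"])
      (auto simp: common_shifts_def)
  then have "card (SIGMA p:?W. common_shifts B R p)
      = card (SIGMA r:?D. {b \<in> B. fst r + b \<in> P \<and> snd r + b \<in> P})"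
    by (rule bij_betw_same_card)
  moreover have "finite ?W" "finite ?D"
    using assms by auto
  ultimately show ?thesis
    using assms by (simp add: common_shifts_def)
qed

lemma sum_card_common_shifts_upper:
  assumes "finite B" "R \<subseteq> B" "W \<subseteq> sumset B \<times> sumset B"
  shows "(\<Sum>p\<in>W. real (card (common_shifts B R p))) ^ 2
           \<le> energy 3 B * real (card W)"
proof -
  let ?k = "\<lambda>p. real (card (common_shifts B R p))"
  have "(\<Sum>p\<in>W. ?k p) ^ 2 = (\<Sum>p\<in>W. ?k p * 1) ^ 2"
    by simp
  also have "\<dots> \<le> (\<Sum>p\<in>W. ?k p ^ 2) * (\<Sum>p\<in>W. 1 ^ 2)"
    by (rule Cauchy_Schwarz_ineq_sum)
  also have "(\<Sum>p\<in>W. ?k p ^ 2) \<le> (\<Sum>p\<in>sumset B \<times> sumset B. real (card (common_shifts B B p)) ^ 2)"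
  proof -
    have "?k p \<le> real (card (common_shifts B B p))" for p
      unfolding common_shifts_def using assms(1,2) by (intro of_nat_mono card_mono) auto
    then have "(\<Sum>p\<in>W. ?k p ^ 2) \<le> (\<Sum>p\<in>W. real (card (common_shifts B B p)) ^ 2)"
      by (intro sum_mono power_mono) auto
    also have "\<dots> \<le> (\<Sum>p\<in>sumset B \<times> sumset B. real (card (common_shifts B B p)) ^ 2)"
      using assms(1,3) by (intro sum_mono2) (auto simp: finite_sumset)
    finally show ?thesis .
  qed
  also have "\<dots> = energy 3 B"
    by (rule sum_card_common_shifts_squared[OF assms(1)])
  finally show ?thesis
    by (simp add: mult_right_mono)
qed

lemma card_pairs_difference_in:
  assumes "finite R" "finite Q"
  shows "card {r \<in> R \<times> R. fst r - snd r \<in> Q} = (\<Sum>x\<in>Q. delta_rep R x)"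
  using assms by (simp add: card_eq_sum_card_fibres delta_rep_altdef)

lemma card_le_twice_card_Int:
  assumes "finite B" "X1 \<subseteq> B" "X2 \<subseteq> B"
    and "3 / 4 * real (card B) \<le> real (card X1)" "3 / 4 * real (card B) \<le> real (card X2)"
  shows "real (card B) \<le> 2 * real (card (X1 \<inter> X2))"
proof -
  have "card X1 + card X2 = card (X1 \<union> X2) + card (X1 \<inter> X2)"
    using assms(1-3) by (intro card_Un_Int) (auto intro: finite_subset)
  moreover have "card (X1 \<union> X2) \<le> card B"
    using assms(1-3) by (intro card_mono) auto
  ultimately have "real (card X1) + real (card X2) \<le> real (card B) + real (card (X1 \<inter> X2))"
    by (simp flip: of_nat_add)
  then show ?thesis
    using assms(4,5) by linarith
qed

lemma sum_card_common_shifts_lower: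
  fixes B R P Q :: "real set" and \<Delta> :: real
  assumes "finite B" "R \<subseteq> B" "finite P" "finite Q"
    and rich: "\<And>r. r \<in> R \<Longrightarrow> 3 / 4 * real (card B) \<le> real (card {b \<in> B. b + r \<in> P})"
    and level: "\<And>x. x \<in> Q \<Longrightarrow> \<Delta> \<le> real (delta_rep R x)"
  shows "\<Delta> * real (card Q) * real (card B)
           \<le> 2 * (\<Sum>p\<in>{p \<in> P \<times> P. fst p - snd p \<in> Q}. real (card (common_shifts B R p)))"
proof -
  let ?D = "{r \<in> R \<times> R. fst r - snd r \<in> Q}"
  let ?F = "\<lambda>r. {b \<in> B. fst r + b \<in> P \<and> snd r + b \<in> P}"
  have "finite R"
    using assms(1,2) by (rule finite_subset[rotated])
  have "\<Delta> * real (card Q) = (\<Sum>x\<in>Q. \<Delta>)"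
    by simp
  also have "\<dots> \<le> (\<Sum>x\<in>Q. real (delta_rep R x))"
    by (rule sum_mono) (rule level)
  also have "\<dots> = real (card ?D)"
    using card_pairs_difference_in[OF \<open>finite R\<close> assms(4)] by simp
  finally have "\<Delta> * real (card Q) * real (card B) \<le> (\<Sum>r\<in>?D. real (card B))"
    by (simp add: mult_right_mono)
  also have "\<dots> \<le> (\<Sum>r\<in>?D. 2 * real (card (?F r)))"
  proof (rule sum_mono)
    fix r assume "r \<in> ?D"
    have "real (card B) \<le> 2 * real (card ({b \<in> B. b + fst r \<in> P} \<inter> {b \<in> B. b + snd r \<in> P}))"
      using \<open>r \<in> ?D\<close> by (intro card_le_twice_card_Int assms(1) rich) auto
    moreover have "{b \<in> B. b + fst r \<in> P} \<inter> {b \<in> B. b + snd r \<in> P} = ?F r"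
      by (auto simp: add.commute)
    ultimately show "real (card B) \<le> 2 * real (card (?F r))"
      by simp
  qed
  also have "\<dots> = 2 * (\<Sum>p\<in>{p \<in> P \<times> P. fst p - snd p \<in> Q}. real (card (common_shifts B R p)))"
    using arg_cong[OF sum_card_common_shifts_swap[OF assms(1) \<open>finite R\<close> assms(3), of Q], of real]
    by (simp add: sum_distrib_left)
  finally show ?thesis .
qed

lemma level_set_triple_count_bound:
  fixes B R P Q :: "real set" and \<Delta> :: real
  assumes "finite B" "R \<subseteq> B" "P \<subseteq> sumset B" "finite Q" "0 \<le> \<Delta>"
    and "\<And>r. r \<in> R \<Longrightarrow> 3 / 4 * real (card B) \<le> real (card {b \<in> B. b + r \<in> P})"
    and "\<And>x. x \<in> Q \<Longrightarrow> \<Delta> \<le> real (delta_rep R x)"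
  shows "\<Delta> ^ 2 * real (card Q) ^ 2 * real (card B) ^ 2 \<le> 4 * (energy 3 B * real (triple_count P Q))"
proof -
  let ?W = "{p \<in> P \<times> P. fst p - snd p \<in> Q}"
  let ?N = "\<Sum>p\<in>?W. real (card (common_shifts B R p))"
  have "finite P"
    using assms(1,3) finite_sumset finite_subset by blast
  have "(\<Delta> * real (card Q) * real (card B)) ^ 2 \<le> (2 * ?N) ^ 2"
    using sum_card_common_shifts_lower[OF assms(1,2) \<open>finite P\<close> assms(4,6,7)] assms(5)
    by (intro power_mono) auto
  also have "\<dots> \<le> 4 * (energy 3 B * real (card ?W))"
    using sum_card_common_shifts_upper[OF assms(1,2), of ?W] assms(3)
    by (auto simp: power_mult_distrib)
  finally show ?thesis
    by (simp add: triple_count_eq_card_pairs power_mult_distrib)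
qed

section \<open>Dyadic level sets of the difference function\<close>

lemma level_set_subset_diffset:
  assumes "finite R" "0 < \<Delta>"
  shows "level_set R \<Delta> \<subseteq> diffset R"
  using assms by (auto simp: level_set_def simp flip: delta_rep_pos_iff)

lemma finite_level_set:
  assumes "finite R" "0 < \<Delta>"
  shows "finite (level_set R \<Delta>)"
  using level_set_subset_diffset[OF assms] finite_diffset[OF assms(1)] by (rule finite_subset)

lemma level_set_energy_le:
  assumes "finite R" "0 < \<Delta>" "0 \<le> k"
  shows "\<Delta> powr k * real (card (level_set R \<Delta>)) \<le> energy k R"
proof -
  have "\<Delta> powr k * real (card (level_set R \<Delta>)) = (\<Sum>x\<in>level_set R \<Delta>. \<Delta> powr k)"
    by simp
  also have "\<dots> \<le> (\<Sum>x\<in>level_set R \<Delta>. real (delta_rep R x) powr k)"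
    using assms(2,3) by (intro sum_mono powr_mono2) (auto simp: level_set_def)
  also have "\<dots> \<le> energy k R"
    unfolding energy_def using assms
    by (intro sum_mono2 finite_diffset level_set_subset_diffset) auto
  finally show ?thesis .
qed

lemma floor_log_real_bounds:
  assumes "0 < n"
  shows "2 ^ floor_log n \<le> real n" "real n < 2 * 2 ^ floor_log n"
proof -
  have "2 ^ floor_log n \<le> n" "n < 2 * 2 ^ floor_log n"
    using assms by (simp_all add: floor_log_exp2_le floor_log_exp2_gt)
  then have "real (2 ^ floor_log n) \<le> real n" "real n < real (2 * 2 ^ floor_log n)"
    by (simp_all only: of_nat_le_iff of_nat_less_iff)
  then show "2 ^ floor_log n \<le> real n" "real n < 2 * 2 ^ floor_log n"
    by simp_all
qed

lemma floor_log_le_ln: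
  assumes "0 < n"
  shows "real (floor_log n) * ln 2 \<le> ln (real n)"
  using floor_log_real_bounds(1)[OF assms] assms
  by (metis ln_realpow ln_le_cancel_iff zero_less_power zero_less_numeral of_nat_0_less_iff)

lemma energy_le_sum_dyadic_levels:
  assumes "finite R" "0 \<le> k"
  shows "energy k R
    \<le> 2 powr k * (\<Sum>j\<le>floor_log (card R). (2 ^ j) powr k * real (card (level_set R (2 ^ j))))"
proof -
  define scale where "scale x = floor_log (delta_rep R x)" for x
  have scale: "2 ^ scale x \<le> real (delta_rep R x)" "real (delta_rep R x) < 2 * 2 ^ scale x"
    if "x \<in> diffset R" for x
  proof -
    have "0 < delta_rep R x"
      using that assms(1) by (simp add: delta_rep_pos_iff)
    then show "2 ^ scale x \<le> real (delta_rep R x)" "real (delta_rep R x) < 2 * 2 ^ scale x"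
      unfolding scale_def by (rule floor_log_real_bounds)+
  qed
  have "scale x \<le> floor_log (card R)" for x
    unfolding scale_def by (rule floor_log_le_iff[OF delta_rep_le_card[OF assms(1)]])
  then have "energy k R
      = (\<Sum>j\<le>floor_log (card R). \<Sum>x\<in>{x \<in> diffset R. scale x = j}. real (delta_rep R x) powr k)"
    unfolding energy_def using finite_diffset[OF assms(1)] by (intro sum.group[symmetric]) auto
  also have "\<dots> \<le> (\<Sum>j\<le>floor_log (card R).
      2 powr k * ((2 ^ j) powr k * real (card (level_set R (2 ^ j)))))"
  proof (rule sum_mono)
    fix j
    let ?S = "{x \<in> diffset R. scale x = j}"
    have "(\<Sum>x\<in>?S. real (delta_rep R x) powr k) \<le> (\<Sum>x\<in>?S. (2 * 2 ^ j) powr k)"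
      using scale(2) assms(2) by (intro sum_mono powr_mono2) (auto intro: less_imp_le)
    also have "\<dots> \<le> (\<Sum>x\<in>level_set R (2 ^ j). (2 * 2 ^ j) powr k)"
    proof (rule sum_mono2)
      show "?S \<subseteq> level_set R (2 ^ j)"
        using scale unfolding level_set_def by auto
    qed (simp_all add: finite_level_set[OF assms(1)])
    also have "\<dots> = 2 powr k * ((2 ^ j) powr k * real (card (level_set R (2 ^ j))))"
      by (simp add: powr_mult)
    finally show "(\<Sum>x\<in>?S. real (delta_rep R x) powr k)
        \<le> 2 powr k * ((2 ^ j) powr k * real (card (level_set R (2 ^ j))))" .
  qed
  finally show ?thesis
    by (simp add: sum_distrib_left)
qed

lemma energy_dyadic_pigeonhole:
  assumes "finite R" "0 \<le> k"
  obtains \<Delta> where "1 \<le> \<Delta>"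
    "\<Delta> powr k * real (card (level_set R \<Delta>)) \<le> energy k R"
    "energy k R
       \<le> 2 powr k * real (Suc (floor_log (card R))) * (\<Delta> powr k * real (card (level_set R \<Delta>)))"
proof -
  define J where "J = {..floor_log (card R)}"
  define f where "f j = (2 ^ j) powr k * real (card (level_set R (2 ^ j)))" for j :: nat
  obtain j where j: "f j = Max (f ` J)"
    using Max_in[of "f ` J"] unfolding J_def by fastforce
  have "energy k R \<le> 2 powr k * sum f J"
    using energy_le_sum_dyadic_levels[OF assms] unfolding f_def J_def .
  also have "\<dots> \<le> 2 powr k * (real (card J) * f j)"
    unfolding j by (intro mult_left_mono sum_bounded_above) (auto simp: J_def)
  finally have upper: "energy k R \<le> 2 powr k * real (Suc (floor_log (card R))) * f j"
    by (simp add: J_def mult_ac)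
  show thesis
  proof (rule that[of "2 ^ j"])
    show "(2 ^ j) powr k * real (card (level_set R (2 ^ j))) \<le> energy k R"
      by (rule level_set_energy_le[OF assms(1) _ assms(2)]) simp
  qed (use upper in \<open>simp_all add: f_def\<close>)
qed

section \<open>Energy decrement and the choice of the level\<close>

lemma exp_four_mul_less_power_floor:
  fixes L :: real
  assumes "exp 8 \<le> L"
  shows "exp (4 * L) < L ^ nat \<lfloor>L\<rfloor>"
proof -
  have "2 \<le> L"
    using assms exp_ge_add_one_self[of 8] by linarith
  then have "4 * L < real (nat \<lfloor>L\<rfloor>) * 8"
    by linarith
  then have "exp (4 * L) < exp 8 ^ nat \<lfloor>L\<rfloor>"
    by (simp flip: exp_of_nat_mult)
  also have "\<dots> \<le> L ^ nat \<lfloor>L\<rfloor>"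
    using assms by (intro power_mono) auto
  finally show ?thesis .
qed

lemma mult_power_le_of_decay:
  fixes f :: "nat \<Rightarrow> real" and L :: real
  assumes "0 \<le> L" "\<And>i. i < m \<Longrightarrow> f (Suc i) * L \<le> f i" "i \<le> m"
  shows "f i * L ^ i \<le> f 0"
  using assms(3)
proof (induction i)
  case (Suc i)
  have "f (Suc i) * L ^ Suc i = (f (Suc i) * L) * L ^ i"
    by (simp add: mult_ac)
  also have "\<dots> \<le> f i * L ^ i"
    using assms(1,2) Suc.prems by (intro mult_right_mono) auto
  also have "\<dots> \<le> f 0"
    using Suc by simp
  finally show ?case .
qed simp

lemma exists_subset_energy_rich_set:
  fixes A :: "real set" and k :: real
  assumes "finite A" "exp 8 \<le> ln (real (card A))" "0 \<le> k" "k \<le> 2"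
  shows "\<exists>B \<subseteq> A. card A \<le> 2 * card B \<and> energy k B / ln (real (card A)) \<le> energy k (rich_set A B)"
proof (rule ccontr)
  define L where "L = ln (real (card A))"
  define m where "m = nat \<lfloor>L\<rfloor>"
  define Bs where "Bs i = (rich_set A ^^ i) A" for i
  assume "\<not> ?thesis"
  then have drop: "energy k (rich_set A B) < energy k B / L" if "B \<subseteq> A" "card A \<le> 2 * card B" for B
    using that unfolding L_def by auto
  have "0 < L"
    using assms(2) exp_gt_zero[of 8] unfolding L_def by linarith
  have "0 < card A"
    using \<open>0 < L\<close> unfolding L_def by (cases "card A") auto
  have Bs_sub: "Bs i \<subseteq> A" for i
    unfolding Bs_def by (rule iterated_rich_set_subset)
  have "real m \<le> L"
    unfolding m_def using \<open>0 < L\<close> by (simp add: of_nat_floor)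
  then have half: "card A \<le> 2 * card (Bs i)" if "i \<le> m" for i
    unfolding Bs_def using that \<open>0 < L\<close> assms(1)
    by (intro card_iterated_rich_set) (auto simp: L_def)
  have "energy k (Bs (Suc i)) * L \<le> energy k (Bs i)" if "i < m" for i
    using drop[OF Bs_sub half[of i]] that \<open>0 < L\<close> by (simp add: Bs_def pos_less_divide_eq)
  then have decay: "energy k (Bs m) * L ^ m \<le> energy k A"
    using mult_power_le_of_decay[of L m "\<lambda>i. energy k (Bs i)" m] \<open>0 < L\<close> by (simp add: Bs_def)
  have "1 \<le> energy k (Bs m)"
    using half[of m] \<open>0 < card A\<close> assms(1,3) Bs_sub[of m]
    by (intro one_le_energy) (auto intro: finite_subset)
  then have "L ^ m \<le> energy k (Bs m) * L ^ m"
    using \<open>0 < L\<close> by simp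
  also have "\<dots> \<le> energy k A"
    by (rule decay)
  also have "\<dots> \<le> real (card A) ^ 4"
    by (rule energy_le_card_power_4[OF assms(1,3,4)])
  also have "\<dots> = exp (4 * L)"
    using exp_of_nat_mult[of 4 L] \<open>0 < card A\<close> by (simp add: L_def)
  finally show False
    using exp_four_mul_less_power_floor[of L] assms(2) unfolding L_def m_def by simp
qed

lemma rich_set_level_set_triple_count:
  fixes A B :: "real set" and \<Delta> :: real
  assumes "finite B" "0 < \<Delta>"
  shows "\<Delta> ^ 2 * real (card (level_set (rich_set A B) \<Delta>)) ^ 2 * real (card B) ^ 2
    \<le> 4 * (energy 3 B * real (triple_count (popular_sums A B) (level_set (rich_set A B) \<Delta>)))"
proof (rule level_set_triple_count_bound[OF assms(1) rich_set_subset popular_sums_subset])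
  show "finite (level_set (rich_set A B) \<Delta>)"
    using assms rich_set_subset by (intro finite_level_set) (auto intro: finite_subset)
  show "3 / 4 * real (card B) \<le> real (card {b \<in> B. b + r \<in> popular_sums A B})"
    if "r \<in> rich_set A B" for r
    using that unfolding mem_rich_set_iff by blast
  show "\<Delta> \<le> real (delta_rep (rich_set A B) x)" if "x \<in> level_set (rich_set A B) \<Delta>" for x
    using that unfolding level_set_def by blast
qed (use assms(2) in simp)

lemma dyadic_scale_count_le:
  fixes k :: real
  assumes "finite A" "R \<subseteq> A" "1 \<le> ln (real (card A))" "k \<le> 2"
  shows "2 powr k * real (Suc (floor_log (card R))) \<le> 12 * ln (real (card A))"
proof -
  have "0 < card A"
    using assms(3) by (cases "card A") auto
  have "real (floor_log (card R)) \<le> real (floor_log (card A))"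
    using assms(1,2) by (simp add: card_mono floor_log_le_iff)
  also have "\<dots> \<le> 3 / 2 * ln (real (card A))"
  proof -
    have "real (floor_log (card A)) * (2 / 3) \<le> real (floor_log (card A)) * ln 2"
      by (intro mult_left_mono ln2_ge_two_thirds) simp
    also have "\<dots> \<le> ln (real (card A))"
      using \<open>0 < card A\<close> by (rule floor_log_le_ln)
    finally show ?thesis
      by simp
  qed
  finally have "real (Suc (floor_log (card R))) \<le> 3 / 2 * ln (real (card A)) + 1"
    by simp
  moreover have "2 powr k \<le> 2 powr (2::real)"
    using assms(4) by (intro powr_mono) auto
  ultimately have "2 powr k * real (Suc (floor_log (card R)))
      \<le> 4 * (3 / 2 * ln (real (card A)) + 1)"
    by (intro mult_mono) auto
  then show ?thesis
    using assms(3) by simp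
qed

lemma exists_dyadic_level_set:
  fixes k :: real
  assumes "finite A" "R \<subseteq> A" "1 \<le> ln (real (card A))" "0 \<le> k" "k \<le> 2"
  obtains \<Delta> where "1 \<le> \<Delta>"
    "\<Delta> powr k * real (card (level_set R \<Delta>)) \<le> energy k R"
    "energy k R \<le> 12 * ln (real (card A)) * (\<Delta> powr k * real (card (level_set R \<Delta>)))"
proof -
  have "finite R"
    using assms(1,2) by (rule finite_subset[rotated])
  obtain \<Delta> where "1 \<le> \<Delta>" and lower: "\<Delta> powr k * real (card (level_set R \<Delta>)) \<le> energy k R"
    and upper: "energy k R
      \<le> 2 powr k * real (Suc (floor_log (card R))) * (\<Delta> powr k * real (card (level_set R \<Delta>)))"
    using energy_dyadic_pigeonhole[OF \<open>finite R\<close> assms(4)] .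
  note upper
  also have "2 powr k * real (Suc (floor_log (card R))) * (\<Delta> powr k * real (card (level_set R \<Delta>)))
      \<le> 12 * ln (real (card A)) * (\<Delta> powr k * real (card (level_set R \<Delta>)))"
    using dyadic_scale_count_le[OF assms(1,2,3,5)] by (intro mult_right_mono) auto
  finally have "energy k R \<le> 12 * ln (real (card A)) * (\<Delta> powr k * real (card (level_set R \<Delta>)))" .
  with \<open>1 \<le> \<Delta>\<close> lower show thesis
    by (rule that)
qed

lemma rich_set_level_set_bounds:
  fixes A B :: "real set" and k :: real
  defines "R \<equiv> rich_set A B" and "L \<equiv> ln (real (card A))"
  assumes "finite A" "B \<subseteq> A" "1 \<le> L" "0 \<le> k" "k \<le> 2"
    and energy_rich: "energy k B / L \<le> energy k R"
  obtains \<Delta> where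
    "\<Delta> powr k * real (card (level_set R \<Delta>)) \<le> 12 * L * energy k R"
    "energy k R \<le> 12 * L * (\<Delta> powr k * real (card (level_set R \<Delta>)))"
    "energy k R \<le> 12 * L * energy k B"
    "energy k B \<le> 12 * L * energy k R"
    "\<Delta> ^ 2 * real (card (level_set R \<Delta>)) ^ 2 * real (card B) ^ 2
       \<le> 12 * (energy 3 B * real (triple_count (popular_sums A B) (level_set R \<Delta>)))"
proof -
  have "R \<subseteq> B" "finite B"
    using assms(3,4) rich_set_subset finite_subset unfolding R_def by blast+
  then have "R \<subseteq> A"
    using assms(4) by blast
  obtain \<Delta> where "1 \<le> \<Delta>" and level_lower: "\<Delta> powr k * real (card (level_set R \<Delta>)) \<le> energy k R"
    and level_upper: "energy k R \<le> 12 * L * (\<Delta> powr k * real (card (level_set R \<Delta>)))"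
    using exists_dyadic_level_set[OF assms(3) \<open>R \<subseteq> A\<close> assms(5)[unfolded L_def] assms(6,7)]
    unfolding L_def .
  have le_scaled: "x \<le> 12 * L * x" if "0 \<le> x" for x
    using that assms(5) mult_right_mono[of 1 "12 * L" x] by simp
  show thesis
  proof (rule that)
    show "\<Delta> powr k * real (card (level_set R \<Delta>)) \<le> 12 * L * energy k R"
      using level_lower le_scaled[OF energy_nonneg[of k R]] by linarith
    show "energy k R \<le> 12 * L * (\<Delta> powr k * real (card (level_set R \<Delta>)))"
      by (rule level_upper)
    show "energy k R \<le> 12 * L * energy k B"
      using energy_mono[OF \<open>finite B\<close> \<open>R \<subseteq> B\<close> assms(6)] le_scaled[OF energy_nonneg[of k B]]
      by linarith
    show "energy k B \<le> 12 * L * energy k R"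
    proof -
      have "energy k B \<le> L * energy k R"
        using energy_rich assms(5) by (simp add: divide_le_eq mult.commute)
      also have "\<dots> \<le> 12 * L * energy k R"
        using assms(5) energy_nonneg[of k R] by (intro mult_right_mono) auto
      finally show ?thesis .
    qed
    have "\<Delta> ^ 2 * real (card (level_set R \<Delta>)) ^ 2 * real (card B) ^ 2
        \<le> 4 * (energy 3 B * real (triple_count (popular_sums A B) (level_set R \<Delta>)))"
      unfolding R_def using \<open>finite B\<close> \<open>1 \<le> \<Delta>\<close> by (intro rich_set_level_set_triple_count) auto
    moreover have "0 \<le> energy 3 B * real (triple_count (popular_sums A B) (level_set R \<Delta>))"
      by (simp add: energy_nonneg)
    ultimately show "\<Delta> ^ 2 * real (card (level_set R \<Delta>)) ^ 2 * real (card B) ^ 2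
        \<le> 12 * (energy 3 B * real (triple_count (popular_sums A B) (level_set R \<Delta>)))"
      by linarith
  qed
qed

theorem lemma1p7:
  shows "\<exists>(N::nat) (C::real) (c::real). C > 0 \<and>
    (\<forall>A :: real set. finite A \<and> card A \<ge> N \<longrightarrow>
      (\<exists>B. B \<subseteq> A \<and> 2 * card B \<ge> card A \<and>
          energy (12/7) (rich_set A B) \<ge> energy (12/7) B / ln (real (card A)))
      \<and>
      (\<forall>B. B \<subseteq> A \<and> 2 * card B \<ge> card A \<and>
          energy (12/7) (rich_set A B) \<ge> energy (12/7) B / ln (real (card A)) \<longrightarrow>
        (\<exists>\<Delta>::real.
           let R = rich_set A B; P\<^sub>\<Delta> = level_set R \<Delta>; L = ln (real (card A)) in
             \<Delta> powr (12/7) * real (card P\<^sub>\<Delta>) \<le> C * L powr c * energy (12/7) R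
           \<and> energy (12/7) R \<le> C * L powr c * (\<Delta> powr (12/7) * real (card P\<^sub>\<Delta>))
           \<and> energy (12/7) R \<le> C * L powr c * energy (12/7) B
           \<and> energy (12/7) B \<le> C * L powr c * energy (12/7) R
           \<and> \<Delta>^2 * real (card P\<^sub>\<Delta>)^2 * real (card B)^2
               \<le> C * (energy 3 B * real (triple_count (popular_sums A B) P\<^sub>\<Delta>)))))"
proof (rule exI[of _ "nat \<lceil>exp (exp 8 :: real)\<rceil>"], rule exI[of _ 12], rule exI[of _ 1],
    intro conjI allI impI, goal_cases)
  case (2 A)
  then have "exp 8 \<le> ln (real (card A))"
    using ln_mono[of "exp (exp 8)" "real (card A)"] by simp
  with 2 show ?case
    using exists_subset_energy_rich_set[of A "12/7"] by simp
next
  case (3 A B)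
  then have "exp 8 \<le> ln (real (card A))"
    using ln_mono[of "exp (exp 8)" "real (card A)"] by simp
  then have "1 \<le> ln (real (card A))"
    using exp_ge_add_one_self[of 8] by linarith
  with 3 show ?case
    by (auto simp: Let_def abs_of_nonneg intro: rich_set_level_set_bounds[of A B "12/7"])
qed simp

end
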